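(* Assume $\omega_\ell>0$, $\sum_\ell\omega_\ell=1$ and $\|\omega\|_\infty\sum_\ell\omega_\ell d_\ell\le c_0\sum_\ell\omega_\ell^2d_\ell$ for a constant $c_0>0$. Fix any $\alpha>0$ and $r\ge1$. Then there is a constant $C=C(c_0)$ such that with probability at least $1-n^{-r}$ the following holds: for every $m\in[n]$ with $m\le\alpha n$ and every $I,J\subseteq[n]$ with $|I|=|J|=m$, letting $I'\subseteq I$ be the set of $i\in I$ with $\sum_{j\in J}\bar A_{ij}\le\alpha\sum_\ell\omega_\ell d_\ell$, $$\|(\bar A-\mathbb E\bar A)_{I'\times J}\|_{\infty\to2}\le C\sqrt{\alpha\Big(\sum_\ell\omega_\ell^2d_\ell\Big)\,m\,r\log\Big(\frac{en}{m}\Big)}.$$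
   Context: Here $A^{(1)},\dots,A^{(L)}$ are random $n\times n$ matrices whose entries $A^{(\ell)}_{ij}\sim\mathrm{Bern}(p^{(\ell)}_{ij})$, $i,j\in[n]$, $\ell\in[L]$, are all mutually independent (no symmetry imposed). $\bar A=\sum_\ell\omega_\ell A^{(\ell)}$, $d_\ell=\max_{i,j}np^{(\ell)}_{ij}$. For a matrix $B$ and index sets $I',J$, $B_{I'\times J}$ is the submatrix with rows in $I'$ and columns in $J$; $\|B\|_{\infty\to2}=\sup_{\|x\|_\infty\le1}\|Bx\|_2$. *)

theory Defs
  imports "HOL-Probability.Probability"
begin

text \<open>Layers l < L, vertices i, j < n. A sample is a function
  A :: nat \<times> nat \<times> nat \<Rightarrow> bool with A (l,i,j) = (A^{(l)}_{ij} = 1).\<close>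

definition bern_model :: "nat \<Rightarrow> nat \<Rightarrow> (nat \<Rightarrow> nat \<Rightarrow> nat \<Rightarrow> real)
    \<Rightarrow> (nat \<times> nat \<times> nat \<Rightarrow> bool) pmf" where
  "bern_model L n p = Pi_pmf ({..<L} \<times> {..<n} \<times> {..<n}) False
      (\<lambda>(l, i, j). bernoulli_pmf (p l i j))"

definition dmax :: "nat \<Rightarrow> (nat \<Rightarrow> nat \<Rightarrow> nat \<Rightarrow> real) \<Rightarrow> nat \<Rightarrow> real" where
  "dmax n p l = Max {real n * p l i j | i j. i < n \<and> j < n}"

definition Abar :: "nat \<Rightarrow> (nat \<Rightarrow> real) \<Rightarrow> (nat \<times> nat \<times> nat \<Rightarrow> bool) \<Rightarrow> nat \<Rightarrow> nat \<Rightarrow> real" where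
  "Abar L \<omega> A i j = (\<Sum>l<L. \<omega> l * (if A (l, i, j) then 1 else 0))"

definition EAbar :: "nat \<Rightarrow> (nat \<Rightarrow> real) \<Rightarrow> (nat \<Rightarrow> nat \<Rightarrow> nat \<Rightarrow> real) \<Rightarrow> nat \<Rightarrow> nat \<Rightarrow> real" where
  "EAbar L \<omega> p i j = (\<Sum>l<L. \<omega> l * p l i j)"

definition norm_inf2 :: "(nat \<Rightarrow> nat \<Rightarrow> real) \<Rightarrow> nat set \<Rightarrow> nat set \<Rightarrow> real" where
  "norm_inf2 B I J = Sup {sqrt (\<Sum>i\<in>I. (\<Sum>j\<in>J. B i j * x j)\<^sup>2) | x. \<forall>j\<in>J. \<bar>x j\<bar> \<le> 1}"

end

(*
  Fix m, I, J and a sign vector v. On the light rows I' every row sum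
  Y_i = sum_j (Abar - E Abar)_ij v_j is at most 2 alpha sum_l omega_l d_l in absolute value,
  and on such a range exp (lam Y_i^2) is dominated by the finite mixture
  sum_(k,s) exp (1 - k^2) exp (2 s k sqrt lam Y_i) of exponentials linear in Y_i.
  Expanding the product over i, each term is an exponential moment of a linear combination of
  independent centred Bernoulli variables, bounded by the Bernoulli moment generating function;
  with lam of order 1 / (alpha sum_l omega_l^2 d_l) the whole moment is at most e^(4m).
  Markov's inequality and a union bound over the (n choose m)^2 2^m choices of (I, J, v) give the
  tail bound. The quadratic form x |-> |(Abar - E Abar)_(I' x J) x|^2 is convex, so its maximum over
  the cube [-1,1]^J is attained at a sign vector. If sum_l omega_l^2 d_l = 0, all p vanish and the
  bound is trivial.
*)
theory Submission
  imports Defs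
begin

section \<open>Maximising a quadratic form over the cube\<close>

definition row_sq_sum :: "(nat \<Rightarrow> nat \<Rightarrow> real) \<Rightarrow> nat set \<Rightarrow> nat set \<Rightarrow> (nat \<Rightarrow> real) \<Rightarrow> real" where
  "row_sq_sum B I J x = (\<Sum>i\<in>I. (\<Sum>j\<in>J. B i j * x j)\<^sup>2)"

lemma square_affine_le_endpoints:
  fixes c b t :: real
  assumes "\<bar>t\<bar> \<le> 1"
  shows "(c + b * t)\<^sup>2 \<le> (1 + t) / 2 * (c + b)\<^sup>2 + (1 - t) / 2 * (c - b)\<^sup>2"
proof -
  have "0 \<le> b\<^sup>2 * (1 - t\<^sup>2)"
    using assms by (simp add: abs_square_le_1)
  also have "b\<^sup>2 * (1 - t\<^sup>2) = (1 + t) / 2 * (c + b)\<^sup>2 + (1 - t) / 2 * (c - b)\<^sup>2 - (c + b * t)\<^sup>2"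
    by (simp add: power2_eq_square field_simps)
  finally show ?thesis
    by simp
qed

lemma row_sq_sum_cong: "(\<And>j. j \<in> J \<Longrightarrow> x j = y j) \<Longrightarrow> row_sq_sum B I J x = row_sq_sum B I J y"
  unfolding row_sq_sum_def by (intro sum.cong refl arg_cong[where f = "\<lambda>u. u\<^sup>2"]) auto

lemma row_sq_sum_le_max_update:
  assumes "finite J" "k \<in> J" "\<bar>x k\<bar> \<le> 1"
  shows "row_sq_sum B I J x \<le> max (row_sq_sum B I J (x(k := 1))) (row_sq_sum B I J (x(k := -1)))"
    (is "_ \<le> max ?plus ?minus")
proof -
  define c where "c i = (\<Sum>j\<in>J - {k}. B i j * x j)" for i
  have split: "row_sq_sum B I J (x(k := s)) = (\<Sum>i\<in>I. (c i + B i k * s)\<^sup>2)" for s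
  proof -
    have "(\<Sum>j\<in>J. B i j * (x(k := s)) j) = c i + B i k * s" for i
      unfolding c_def using assms(1,2) by (simp add: sum.remove add.commute)
    then show ?thesis
      unfolding row_sq_sum_def by simp
  qed
  have "row_sq_sum B I J x = (\<Sum>i\<in>I. (c i + B i k * x k)\<^sup>2)"
    using split[of "x k"] by simp
  also have "\<dots> \<le> (\<Sum>i\<in>I. (1 + x k) / 2 * (c i + B i k)\<^sup>2 + (1 - x k) / 2 * (c i - B i k)\<^sup>2)"
    using assms(3) by (intro sum_mono square_affine_le_endpoints)
  also have "\<dots> = (1 + x k) / 2 * ?plus + (1 - x k) / 2 * ?minus"
    by (simp add: split sum.distrib sum_distrib_left)
  also have "\<dots> \<le> (1 + x k) / 2 * max ?plus ?minus + (1 - x k) / 2 * max ?plus ?minus"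
    using assms(3) by (intro add_mono mult_left_mono) auto
  also have "\<dots> = max ?plus ?minus"
    by (simp add: field_simps)
  finally show ?thesis .
qed

lemma row_sq_sum_le_sign_vector:
  assumes "finite J" "\<forall>j\<in>J. \<bar>x j\<bar> \<le> 1"
  shows "\<exists>v\<in>PiE J (\<lambda>_. {-1, 1}). row_sq_sum B I J x \<le> row_sq_sum B I J v"
proof -
  have "\<exists>v\<in>PiE J (\<lambda>_. {-1, 1}). row_sq_sum B I J x \<le> row_sq_sum B I J v"
    if "finite K" "\<forall>j\<in>J. \<bar>x j\<bar> \<le> 1" "\<forall>j\<in>J - K. x j \<in> {-1, 1}" for K x
    using that
  proof (induction K arbitrary: x rule: finite_induct)
    case empty
    then have "restrict x J \<in> PiE J (\<lambda>_. {-1, 1})"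
      by auto
    moreover have "row_sq_sum B I J x = row_sq_sum B I J (restrict x J)"
      by (rule row_sq_sum_cong) auto
    ultimately show ?case
      by force
  next
    case (insert k K)
    show ?case
    proof (cases "k \<in> J")
      case False
      then show ?thesis
        using insert by auto
    next
      case True
      have upd: "\<exists>v\<in>PiE J (\<lambda>_. {-1, 1}). row_sq_sum B I J (x(k := s)) \<le> row_sq_sum B I J v"
        if "s \<in> {-1, 1}" for s :: real
        using that insert.prems by (intro insert.IH) auto
      obtain v1 where "v1 \<in> PiE J (\<lambda>_. {-1, 1})" "row_sq_sum B I J (x(k := 1)) \<le> row_sq_sum B I J v1"
        using upd[of 1] by auto
      moreover obtain v2 where "v2 \<in> PiE J (\<lambda>_. {-1, 1})" "row_sq_sum B I J (x(k := -1)) \<le> row_sq_sum B I J v2"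
        using upd[of "-1"] by auto
      moreover have "row_sq_sum B I J x \<le> row_sq_sum B I J (x(k := 1)) \<or> row_sq_sum B I J x \<le> row_sq_sum B I J (x(k := -1))"
        using row_sq_sum_le_max_update[OF assms(1) True] insert.prems True by (simp add: le_max_iff_disj)
      ultimately show ?thesis
        by (meson order_trans)
    qed
  qed
  from this[OF assms(1) assms(2)] show ?thesis
    by simp
qed

lemma norm_inf2_le_of_sign_vectors:
  assumes "finite J" "\<forall>v\<in>PiE J (\<lambda>_. {-1, 1}). row_sq_sum B I J v \<le> R"
  shows "norm_inf2 B I J \<le> sqrt R"
  unfolding norm_inf2_def
proof (rule cSup_least)
  show "{sqrt (\<Sum>i\<in>I. (\<Sum>j\<in>J. B i j * x j)\<^sup>2) | x. \<forall>j\<in>J. \<bar>x j\<bar> \<le> 1} \<noteq> {}"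
    by (auto intro!: exI[of _ "\<lambda>_. 0"])
next
  fix z
  assume "z \<in> {sqrt (\<Sum>i\<in>I. (\<Sum>j\<in>J. B i j * x j)\<^sup>2) | x. \<forall>j\<in>J. \<bar>x j\<bar> \<le> 1}"
  then obtain x where "\<forall>j\<in>J. \<bar>x j\<bar> \<le> 1" "z = sqrt (row_sq_sum B I J x)"
    unfolding row_sq_sum_def by auto
  then show "z \<le> sqrt R"
    using row_sq_sum_le_sign_vector[OF assms(1)] assms(2) by (meson order_trans real_sqrt_le_iff)
qed

section \<open>Exponential moments\<close>

lemma exp_le_1_add_add_square:
  fixes u :: real
  assumes "\<bar>u\<bar> \<le> 1"
  shows "exp u \<le> 1 + u + u\<^sup>2"
proof (cases "u \<ge> 0")
  case True
  then show ?thesis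
    using exp_bound[of u] assms by auto
next
  case False
  have "1 \<le> (1 - u) * (1 + u + u\<^sup>2)"
  proof -
    have "u ^ 3 \<le> 0"
      using False by (simp add: power3_eq_cube mult_nonneg_nonpos)
    moreover have "(1 - u) * (1 + u + u\<^sup>2) = 1 - u ^ 3"
      by (simp add: algebra_simps power2_eq_square power3_eq_cube)
    ultimately show ?thesis
      by linarith
  qed
  moreover have "exp u * (1 - u) \<le> 1"
    using exp_ge_add_one_self[of "-u"] False by (simp add: exp_minus field_simps)
  ultimately have "exp u * (1 - u) \<le> (1 + u + u\<^sup>2) * (1 - u)"
    by (simp add: mult.commute)
  then show ?thesis
    using False by (simp add: mult_le_cancel_right)
qed

lemma bernoulli_centered_mgf_le:
  fixes q t :: real
  assumes "0 \<le> q" "q \<le> 1" "\<bar>t\<bar> \<le> 1"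
  shows "measure_pmf.expectation (bernoulli_pmf q) (\<lambda>b. exp (t * ((if b then 1 else 0) - q)))
    \<le> exp (t\<^sup>2 * q)"
proof -
  have small: "\<bar>t * (b - q)\<bar> \<le> 1" if "b \<in> {0, 1}" for b :: real
    using assms that by (auto simp: abs_mult intro!: mult_le_one)
  have "measure_pmf.expectation (bernoulli_pmf q) (\<lambda>b. exp (t * ((if b then 1 else 0) - q)))
      = q * exp (t * (1 - q)) + (1 - q) * exp (t * (0 - q))"
    using assms by simp
  also have "\<dots> \<le> q * (1 + t * (1 - q) + (t * (1 - q))\<^sup>2) + (1 - q) * (1 + t * (0 - q) + (t * (0 - q))\<^sup>2)"
    using assms small[of 1] small[of 0] by (intro add_mono mult_left_mono exp_le_1_add_add_square) auto
  also have "\<dots> = 1 + t\<^sup>2 * q * (1 - q)"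
    by (simp add: power2_eq_square algebra_simps)
  also have "\<dots> \<le> 1 + t\<^sup>2 * q"
    using assms by (simp add: mult_left_mono mult_right_le_one_le)
  also have "\<dots> \<le> exp (t\<^sup>2 * q)"
    by (rule exp_ge_add_one_self)
  finally show ?thesis .
qed

lemma expectation_exp_linear_Pi_bernoulli_le:
  fixes a q :: "'a \<Rightarrow> real"
  assumes "finite D" "\<forall>c\<in>D. 0 \<le> q c \<and> q c \<le> 1" "\<forall>c\<in>D. \<bar>a c\<bar> \<le> 1"
  shows "measure_pmf.expectation (Pi_pmf D dflt (\<lambda>c. bernoulli_pmf (q c)))
      (\<lambda>A. exp (\<Sum>c\<in>D. a c * ((if A c then 1 else 0) - q c))) \<le> exp (\<Sum>c\<in>D. (a c)\<^sup>2 * q c)"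
proof -
  have "measure_pmf.expectation (Pi_pmf D dflt (\<lambda>c. bernoulli_pmf (q c)))
      (\<lambda>A. exp (\<Sum>c\<in>D. a c * ((if A c then 1 else 0) - q c)))
    = measure_pmf.expectation (Pi_pmf D dflt (\<lambda>c. bernoulli_pmf (q c)))
      (\<lambda>A. \<Prod>c\<in>D. exp (a c * ((if A c then 1 else 0) - q c)))"
    using assms(1) by (simp add: exp_sum)
  also have "\<dots> = (\<Prod>c\<in>D. measure_pmf.expectation (bernoulli_pmf (q c))
      (\<lambda>b. exp (a c * ((if b then 1 else 0) - q c))))"
    using assms(1) by (intro expectation_prod_Pi_pmf) (auto intro: integrable_measure_pmf_finite)
  also have "\<dots> \<le> (\<Prod>c\<in>D. exp ((a c)\<^sup>2 * q c))"
    using assms by (intro prod_mono conjI integral_nonneg_AE AE_I2 bernoulli_centered_mgf_le) auto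
  also have "\<dots> = exp (\<Sum>c\<in>D. (a c)\<^sup>2 * q c)"
    using assms(1) by (simp add: exp_sum)
  finally show ?thesis .
qed

lemma expectation_prod_le_mixture_power:
  fixes M :: "'a pmf" and F Y :: "'a \<Rightarrow> 'i \<Rightarrow> real" and w t :: "'q \<Rightarrow> real"
  assumes fin: "finite (set_pmf M)" "finite I" "finite Q"
    and w: "\<forall>q\<in>Q. 0 \<le> w q"
    and F: "\<forall>A. \<forall>i\<in>I. 0 \<le> F A i \<and> F A i \<le> (\<Sum>q\<in>Q. w q * exp (t q * Y A i))"
    and mgf: "\<forall>f\<in>PiE I (\<lambda>_. Q).
      measure_pmf.expectation M (\<lambda>A. exp (\<Sum>i\<in>I. t (f i) * Y A i)) \<le> exp (V * (\<Sum>i\<in>I. (t (f i))\<^sup>2))"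
  shows "measure_pmf.expectation M (\<lambda>A. \<Prod>i\<in>I. F A i) \<le> (\<Sum>q\<in>Q. w q * exp (V * (t q)\<^sup>2)) ^ card I"
proof -
  have intg: "integrable M g" for g :: "'a \<Rightarrow> real"
    using fin(1) by (rule integrable_measure_pmf_finite)
  have expand: "(\<Prod>i\<in>I. \<Sum>q\<in>Q. w q * h i q)
      = (\<Sum>f\<in>PiE I (\<lambda>_. Q). (\<Prod>i\<in>I. w (f i)) * (\<Prod>i\<in>I. h i (f i)))" for h :: "'i \<Rightarrow> 'q \<Rightarrow> real"
    using fin(2,3) by (simp add: prod_sum_PiE prod.distrib)
  have "measure_pmf.expectation M (\<lambda>A. \<Prod>i\<in>I. F A i)
      \<le> measure_pmf.expectation M (\<lambda>A. \<Prod>i\<in>I. \<Sum>q\<in>Q. w q * exp (t q * Y A i))"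
    using F by (intro integral_mono intg prod_mono) auto
  also have "\<dots> = measure_pmf.expectation M
      (\<lambda>A. \<Sum>f\<in>PiE I (\<lambda>_. Q). (\<Prod>i\<in>I. w (f i)) * exp (\<Sum>i\<in>I. t (f i) * Y A i))"
    using fin(2) by (simp add: expand exp_sum)
  also have "\<dots> = (\<Sum>f\<in>PiE I (\<lambda>_. Q).
      (\<Prod>i\<in>I. w (f i)) * measure_pmf.expectation M (\<lambda>A. exp (\<Sum>i\<in>I. t (f i) * Y A i)))"
    by (simp add: intg)
  also have "\<dots> \<le> (\<Sum>f\<in>PiE I (\<lambda>_. Q). (\<Prod>i\<in>I. w (f i)) * exp (V * (\<Sum>i\<in>I. (t (f i))\<^sup>2)))"
    using w mgf by (intro sum_mono mult_left_mono prod_nonneg) (auto simp: PiE_iff)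
  also have "\<dots> = (\<Sum>f\<in>PiE I (\<lambda>_. Q). (\<Prod>i\<in>I. w (f i)) * (\<Prod>i\<in>I. exp (V * (t (f i))\<^sup>2)))"
    using fin(2) by (simp add: exp_sum sum_distrib_left)
  also have "\<dots> = (\<Prod>i\<in>I. \<Sum>q\<in>Q. w q * exp (V * (t q)\<^sup>2))"
    by (rule expand[symmetric])
  also have "\<dots> = (\<Sum>q\<in>Q. w q * exp (V * (t q)\<^sup>2)) ^ card I"
    by simp
  finally show ?thesis .
qed

(* A discrete Hubbard-Stratonovich transform: exp (u^2) is dominated by a finite mixture of
   exponentials exp (2 s k u) that are linear in u, with Gaussian weights exp (1 - k^2). *)
definition grid :: "real \<Rightarrow> (nat \<times> real) set" where
  "grid T = {..nat \<lfloor>T\<rfloor>} \<times> {-1, 1}"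

definition grid_weight :: "nat \<times> real \<Rightarrow> real" where
  "grid_weight q = exp (1 - (real (fst q))\<^sup>2)"

definition grid_slope :: "nat \<times> real \<Rightarrow> real" where
  "grid_slope q = 2 * snd q * real (fst q)"

lemma exp_row_sq_sum_filter:
  fixes lam :: real
  assumes "finite I" "0 \<le> lam"
  shows "exp (lam * row_sq_sum B {i\<in>I. P i} J x)
    = (\<Prod>i\<in>I. exp (if P i then (sqrt lam * (\<Sum>j\<in>J. B i j * x j))\<^sup>2 else 0))"
proof -
  have "lam * row_sq_sum B {i\<in>I. P i} J x = (\<Sum>i\<in>I. lam * (if P i then (\<Sum>j\<in>J. B i j * x j)\<^sup>2 else 0))"
    unfolding row_sq_sum_def using assms(1) by (simp add: sum.inter_filter sum_distrib_left)
  also have "\<dots> = (\<Sum>i\<in>I. if P i then (sqrt lam * (\<Sum>j\<in>J. B i j * x j))\<^sup>2 else 0)"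
    using assms(2) by (intro sum.cong) (auto simp: power_mult_distrib)
  finally show ?thesis
    using assms(1) by (simp add: exp_sum)
qed

lemma finite_grid: "finite (grid T)"
  by (simp add: grid_def)

lemma grid_weight_nonneg: "0 \<le> grid_weight q"
  by (simp add: grid_weight_def)

lemma abs_grid_slope_le:
  assumes "q \<in> grid T" "0 \<le> T"
  shows "\<bar>grid_slope q\<bar> \<le> 2 * T"
proof -
  have "real (fst q) \<le> real (nat \<lfloor>T\<rfloor>)"
    using assms(1) by (auto simp: grid_def)
  also have "\<dots> \<le> T"
    using assms(2) by (rule of_nat_floor)
  finally show ?thesis
    using assms(1) by (auto simp: grid_def grid_slope_def abs_mult)
qed

lemma exp_square_le_grid_sum:
  fixes u :: real
  assumes "\<bar>u\<bar> \<le> T"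
  shows "exp (u\<^sup>2) \<le> (\<Sum>q\<in>grid T. grid_weight q * exp (grid_slope q * u))"
proof -
  define k where "k = nat \<lfloor>\<bar>u\<bar>\<rfloor>"
  define s :: real where "s = (if u \<ge> 0 then 1 else -1)"
  have k: "real k \<le> \<bar>u\<bar>" "\<bar>u\<bar> < real k + 1" "k \<le> nat \<lfloor>T\<rfloor>"
    using assms unfolding k_def by linarith+
  have "u\<^sup>2 \<le> 1 - (real k)\<^sup>2 + grid_slope (k, s) * u"
  proof -
    have "(\<bar>u\<bar> - real k)\<^sup>2 \<le> 1"
      using k by (simp add: abs_square_le_1)
    moreover have "grid_slope (k, s) * u = 2 * real k * \<bar>u\<bar>"
      unfolding grid_slope_def s_def by auto
    moreover have "u\<^sup>2 = (\<bar>u\<bar> - real k)\<^sup>2 + 2 * real k * \<bar>u\<bar> - (real k)\<^sup>2"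
      by (simp add: power2_eq_square algebra_simps abs_mult_self_eq)
    ultimately show ?thesis
      by linarith
  qed
  then have "exp (u\<^sup>2) \<le> grid_weight (k, s) * exp (grid_slope (k, s) * u)"
    by (simp add: grid_weight_def flip: exp_add)
  also have "\<dots> \<le> (\<Sum>q\<in>grid T. grid_weight q * exp (grid_slope q * u))"
    using k(3) by (intro member_le_sum) (auto simp: grid_def s_def grid_weight_nonneg)
  finally show ?thesis .
qed

lemma exp_truncated_square_le_grid_sum:
  fixes u :: real
  assumes "P \<Longrightarrow> \<bar>u\<bar> \<le> T"
  shows "exp (if P then u\<^sup>2 else 0) \<le> (\<Sum>q\<in>grid T. grid_weight q * exp (grid_slope q * u))"
proof (cases P)
  case True
  then show ?thesis
    using exp_square_le_grid_sum[OF assms] by simp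
next
  case False
  have "exp (if P then u\<^sup>2 else 0) \<le> grid_weight (0, 1) * exp (grid_slope (0, 1) * u)"
    using False by (simp add: grid_weight_def grid_slope_def)
  also have "\<dots> \<le> (\<Sum>q\<in>grid T. grid_weight q * exp (grid_slope q * u))"
    by (intro member_le_sum) (auto simp: grid_def grid_weight_nonneg)
  finally show ?thesis .
qed

lemma real_of_nat_le_square: "real k \<le> (real k)\<^sup>2"
  by (cases k) (auto simp: power2_eq_square)

lemma grid_sum_le_exp_4:
  fixes v :: real
  assumes "0 \<le> v" "8 * v \<le> 1"
  shows "(\<Sum>q\<in>grid T. grid_weight q * exp ((grid_slope q)\<^sup>2 * v)) \<le> exp 4"
proof -
  define a :: real where "a = exp (- 1 / 2)"
  have a: "0 < a" "a \<le> 2 / 3"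
    using exp_ge_add_one_self[of "1 / 2"] by (auto simp: a_def exp_minus field_simps)
  have grid_term: "grid_weight (k, s) * exp ((grid_slope (k, s))\<^sup>2 * v) \<le> exp 1 * a ^ k"
    if "s \<in> {-1, 1}" for k s
  proof -
    have "(grid_slope (k, s))\<^sup>2 * v = (real k)\<^sup>2 * (4 * v)"
      using that by (auto simp: grid_slope_def power_mult_distrib)
    also have "\<dots> \<le> (real k)\<^sup>2 * (1 / 2)"
      using assms by (intro mult_left_mono) auto
    finally have "1 - (real k)\<^sup>2 + (grid_slope (k, s))\<^sup>2 * v \<le> 1 - real k / 2"
      using real_of_nat_le_square[of k] by linarith
    then have "grid_weight (k, s) * exp ((grid_slope (k, s))\<^sup>2 * v) \<le> exp (1 - real k / 2)"
      by (simp add: grid_weight_def flip: exp_add)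
    also have "\<dots> = exp 1 * exp (real k * (- 1 / 2))"
      unfolding exp_add[symmetric] by (rule arg_cong[of _ _ exp]) simp
    also have "\<dots> = exp 1 * a ^ k"
      unfolding a_def by (simp only: exp_of_nat_mult)
    finally show ?thesis .
  qed
  have "(\<Sum>q\<in>grid T. grid_weight q * exp ((grid_slope q)\<^sup>2 * v)) \<le> (\<Sum>(k, s)\<in>grid T. exp 1 * a ^ k)"
    using grid_term by (intro sum_mono) (auto simp: grid_def)
  also have "\<dots> = 2 * exp 1 * (\<Sum>k<Suc (nat \<lfloor>T\<rfloor>). a ^ k)"
    by (simp add: grid_def sum.cartesian_product[symmetric] lessThan_Suc_atMost sum_distrib_left mult.assoc)
  also have "\<dots> \<le> 2 * exp 1 * 3"
  proof -
    have "(\<Sum>k<Suc (nat \<lfloor>T\<rfloor>). a ^ k) = (1 - a ^ Suc (nat \<lfloor>T\<rfloor>)) / (1 - a)"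
      using a by (subst sum_gp_strict) simp
    also have "\<dots> \<le> 1 / (1 - a)"
      using a by (intro divide_right_mono) auto
    also have "\<dots> \<le> 3"
      using a by (simp add: field_simps)
    finally show ?thesis
      by simp
  qed
  also have "\<dots> \<le> exp 1 * exp 3"
    using exp_lower_Taylor_quadratic[of 3] by simp
  also have "\<dots> = exp 4"
    by (simp flip: exp_add)
  finally show ?thesis .
qed

section \<open>Binomial coefficients\<close>

lemma pow_div_fact_le_exp: "real m ^ m / fact m \<le> exp (real m)"
proof -
  have sums: "(\<lambda>k. real m ^ k /\<^sub>R fact k) sums exp (real m)"
    by (rule exp_converges)
  have "(\<Sum>k\<in>{m}. real m ^ k /\<^sub>R fact k) \<le> (\<Sum>k. real m ^ k /\<^sub>R fact k)"
    using sums by (intro sum_le_suminf) (auto simp: sums_iff)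
  then show ?thesis
    using sums by (simp add: sums_iff divide_inverse_commute)
qed

lemma binomial_le_exp_mult_ln:
  assumes "1 \<le> m" "m \<le> n"
  shows "real (n choose m) \<le> exp (real m * ln (exp 1 * real n / real m))"
proof -
  have "real (n choose m) * fact m \<le> real n ^ m"
    using binomial_fact_pow[of n m] by (metis of_nat_fact of_nat_le_iff of_nat_mult of_nat_power)
  then have "real (n choose m) \<le> (real n / real m) ^ m * (real m ^ m / fact m)"
    using assms by (simp add: power_divide field_simps)
  also have "\<dots> \<le> (real n / real m) ^ m * exp (real m)"
    by (intro mult_left_mono pow_div_fact_le_exp) auto
  also have "\<dots> = exp (real m * (ln (real n / real m) + 1))"
    using assms by (simp add: exp_of_nat_mult distrib_left exp_add)
  also have "\<dots> = exp (real m * ln (exp 1 * real n / real m))"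
    using assms by (simp add: ln_div ln_mult_pos)
  finally show ?thesis .
qed

lemma ln_e_n_div_m_ge:
  assumes "1 \<le> m" "m \<le> n"
  shows "1 \<le> ln (exp 1 * real n / real m)" "1 + ln (real n) \<le> real m * ln (exp 1 * real n / real m)"
proof -
  have ln: "ln (exp 1 * real n / real m) = 1 + ln (real n) - ln (real m)"
    using assms by (simp add: ln_div ln_mult_pos)
  have "ln (real m) \<le> ln (real n)"
    using assms by simp
  then show "1 \<le> ln (exp 1 * real n / real m)"
    unfolding ln by simp
  have "0 \<le> (real m - 1) * (ln (real n) - ln (real m))"
    using assms \<open>ln (real m) \<le> ln (real n)\<close> by simp
  moreover have "ln (real m) \<le> real m - 1"
    using assms by (intro ln_le_minus_one) auto
  ultimately show "1 + ln (real n) \<le> real m * ln (exp 1 * real n / real m)"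
    unfolding ln by (simp add: algebra_simps)
qed

lemma union_bound_term_le:
  fixes r :: real
  assumes "1 \<le> m" "m \<le> n" "1 \<le> r"
  shows "(real (n choose m))\<^sup>2 * 2 ^ m * exp (4 * real m - 16 * real m * r * ln (exp 1 * real n / real m))
    \<le> real n powr (- r) / real n"
proof -
  define l where "l = ln (exp 1 * real n / real m)"
  have l: "1 \<le> l" "1 + ln (real n) \<le> real m * l"
    using ln_e_n_div_m_ge[OF assms(1,2)] unfolding l_def by auto
  have "(real (n choose m))\<^sup>2 \<le> (exp (real m * l))\<^sup>2"
    using binomial_le_exp_mult_ln[OF assms(1,2)] unfolding l_def by (intro power_mono) auto
  also have "\<dots> = exp (2 * real m * l)"
    by (simp add: mult.assoc flip: exp_double)
  finally have binom: "(real (n choose m))\<^sup>2 \<le> exp (2 * real m * l)" .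
  have "(2::real) ^ m \<le> exp 1 ^ m"
    using exp_ge_add_one_self[of 1] by (intro power_mono) auto
  then have two: "(2::real) ^ m \<le> exp (real m)"
    using exp_of_nat_mult[of m "1::real"] by simp
  have "(real (n choose m))\<^sup>2 * 2 ^ m * exp (4 * real m - 16 * real m * r * l)
      \<le> exp (2 * real m * l) * exp (real m) * exp (4 * real m - 16 * real m * r * l)"
    using binom two by (intro mult_right_mono mult_mono) auto
  also have "\<dots> = exp (2 * real m * l + 5 * real m - 16 * real m * r * l)"
    by (simp add: algebra_simps flip: exp_add)
  also have "\<dots> \<le> exp (- (r + 1) * ln (real n))"
  proof -
    have "real m \<le> real m * l"
      using mult_left_mono[of 1 l "real m"] l by simp
    moreover have "real m * l \<le> real m * l * r"
      using mult_left_mono[of 1 r "real m * l"] assms l by simp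
    moreover have "(r + 1) * ln (real n) \<le> 9 * r * (1 + ln (real n))"
      using assms by (intro mult_mono) auto
    moreover have "9 * r * (1 + ln (real n)) \<le> 9 * r * (real m * l)"
      using assms l by (intro mult_left_mono) auto
    ultimately show ?thesis
      by (simp add: algebra_simps)
  qed
  also have "\<dots> = real n powr (- r - 1)"
    using assms by (simp add: powr_def algebra_simps)
  also have "\<dots> = real n powr (- r) / real n"
    using assms by (simp add: powr_diff)
  finally show ?thesis
    unfolding l_def .
qed

section \<open>The layered Bernoulli model\<close>

lemma finite_set_pmf_bern_model: "finite (set_pmf (bern_model L n p))"
  unfolding bern_model_def by (auto simp: set_Pi_pmf intro!: finite_PiE_dflt)

lemma bern_model_Pi_bernoulli:
  "bern_model L n p = Pi_pmf ({..<L} \<times> {..<n} \<times> {..<n}) False (\<lambda>c. bernoulli_pmf (case c of (l, i, j) \<Rightarrow> p l i j))"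
  unfolding bern_model_def by (intro Pi_pmf_cong) auto

lemma bernoulli_pmf_0: "bernoulli_pmf 0 = return_pmf False"
  by (rule pmf_eqI) (auto simp: indicator_def)

lemma bern_model_zero:
  assumes "\<forall>l<L. \<forall>i<n. \<forall>j<n. p l i j = 0"
  shows "bern_model L n p = return_pmf (\<lambda>_. False)"
proof -
  have "bern_model L n p = Pi_pmf ({..<L} \<times> {..<n} \<times> {..<n}) False (\<lambda>_. return_pmf False)"
    unfolding bern_model_def using assms by (intro Pi_pmf_cong) (auto simp: bernoulli_pmf_0)
  then show ?thesis
    by simp
qed

lemma dmax_ge:
  assumes "i < n" "j < n"
  shows "real n * p l i j \<le> dmax n p l"
  unfolding dmax_def
proof (rule Max_ge)
  show "finite {real n * p l i j | i j. i < n \<and> j < n}"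
    by (rule finite_subset[of _ "(\<lambda>(i, j). real n * p l i j) ` ({..<n} \<times> {..<n})"]) auto
qed (use assms in auto)

lemma sum_layers_rows_cols:
  fixes g :: "nat \<Rightarrow> nat \<Rightarrow> nat \<Rightarrow> real"
  assumes "I \<subseteq> {..<n}" "J \<subseteq> {..<n}"
  shows "(\<Sum>c\<in>{..<L} \<times> {..<n} \<times> {..<n}. case c of (l, i, j) \<Rightarrow> if i \<in> I \<and> j \<in> J then g l i j else 0)
    = (\<Sum>i\<in>I. \<Sum>j\<in>J. \<Sum>l<L. g l i j)"
proof -
  have "finite I" "finite J"
    using assms finite_subset by blast+
  then have "(\<Sum>c\<in>{..<L} \<times> {..<n} \<times> {..<n}. case c of (l, i, j) \<Rightarrow> if i \<in> I \<and> j \<in> J then g l i j else 0)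
      = (\<Sum>c\<in>{..<L} \<times> I \<times> J. case c of (l, i, j) \<Rightarrow> g l i j)"
    using assms by (intro sum.mono_neutral_cong_right) (auto split: if_splits)
  also have "\<dots> = (\<Sum>l<L. \<Sum>i\<in>I. \<Sum>j\<in>J. g l i j)"
    by (simp add: sum.cartesian_product)
  also have "\<dots> = (\<Sum>i\<in>I. \<Sum>j\<in>J. \<Sum>l<L. g l i j)"
    by (subst sum.swap) (simp add: sum.swap[of _ "{..<L}"])
  finally show ?thesis .
qed

lemma measure_pmf_UN_le:
  "finite I \<Longrightarrow> measure_pmf.prob M (\<Union>i\<in>I. A i) \<le> (\<Sum>i\<in>I. measure_pmf.prob M (A i))"
  by (rule measure_pmf.finite_measure_subadditive_finite) auto

definition good_event :: "nat \<Rightarrow> nat \<Rightarrow> (nat \<Rightarrow> real) \<Rightarrow> (nat \<Rightarrow> nat \<Rightarrow> nat \<Rightarrow> real)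
    \<Rightarrow> real \<Rightarrow> real \<Rightarrow> real \<Rightarrow> (nat \<times> nat \<times> nat \<Rightarrow> bool) set" where
  "good_event n L \<omega> p C \<alpha> r = {A. \<forall>m I J. 1 \<le> m \<and> m \<le> n \<and> real m \<le> \<alpha> * real n \<and>
      I \<subseteq> {..<n} \<and> J \<subseteq> {..<n} \<and> card I = m \<and> card J = m \<longrightarrow>
      norm_inf2 (\<lambda>i j. Abar L \<omega> A i j - EAbar L \<omega> p i j)
        {i\<in>I. (\<Sum>j\<in>J. Abar L \<omega> A i j) \<le> \<alpha> * (\<Sum>l<L. \<omega> l * dmax n p l)} J
      \<le> C * sqrt (\<alpha> * (\<Sum>l<L. (\<omega> l)\<^sup>2 * dmax n p l) * real m * r * ln (exp 1 * real n / real m))}"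

locale layered_bernoulli =
  fixes n L :: nat and \<omega> :: "nat \<Rightarrow> real" and p :: "nat \<Rightarrow> nat \<Rightarrow> nat \<Rightarrow> real"
  assumes n_pos: "1 \<le> n"
    and p_bounds: "\<forall>l<L. \<forall>i<n. \<forall>j<n. 0 \<le> p l i j \<and> p l i j \<le> 1"
    and weight_pos: "\<forall>l<L. 0 < \<omega> l"
begin

abbreviation mean_degree :: real where
  "mean_degree \<equiv> \<Sum>l<L. \<omega> l * dmax n p l"

abbreviation var_degree :: real where
  "var_degree \<equiv> \<Sum>l<L. (\<omega> l)\<^sup>2 * dmax n p l"

definition centered :: "(nat \<times> nat \<times> nat \<Rightarrow> bool) \<Rightarrow> nat \<Rightarrow> nat \<Rightarrow> real" where
  "centered A i j = Abar L \<omega> A i j - EAbar L \<omega> p i j"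

lemma p_le_dmax_div:
  assumes "i < n" "j < n"
  shows "p l i j \<le> dmax n p l / real n"
  using dmax_ge[OF assms, of p l] n_pos by (simp add: field_simps)

lemma dmax_nonneg:
  assumes "l < L"
  shows "0 \<le> dmax n p l"
proof -
  have "0 \<le> real n * p l 0 0"
    using p_bounds assms n_pos by simp
  also have "\<dots> \<le> dmax n p l"
    using n_pos by (intro dmax_ge) auto
  finally show ?thesis .
qed

lemma mean_degree_nonneg: "0 \<le> mean_degree"
  using weight_pos dmax_nonneg by (intro sum_nonneg mult_nonneg_nonneg) (auto intro: less_imp_le)

lemma var_degree_nonneg: "0 \<le> var_degree"
  using dmax_nonneg by (intro sum_nonneg mult_nonneg_nonneg) auto

lemma variance_sum_le:
  assumes IJ: "I \<subseteq> {..<n}" "J \<subseteq> {..<n}" and x: "\<forall>j\<in>J. \<bar>x j\<bar> \<le> 1"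
    and card_J: "real (card J) \<le> \<alpha> * real n"
  shows "(\<Sum>i\<in>I. \<Sum>j\<in>J. \<Sum>l<L. (s i * \<omega> l * x j)\<^sup>2 * p l i j) \<le> \<alpha> * var_degree * (\<Sum>i\<in>I. (s i)\<^sup>2)"
proof -
  have "(\<Sum>i\<in>I. \<Sum>j\<in>J. \<Sum>l<L. (s i * \<omega> l * x j)\<^sup>2 * p l i j)
      \<le> (\<Sum>i\<in>I. \<Sum>j\<in>J. \<Sum>l<L. (s i)\<^sup>2 * ((\<omega> l)\<^sup>2 * dmax n p l / real n))"
  proof (intro sum_mono)
    fix i j l
    assume "i \<in> I" "j \<in> J" "l \<in> {..<L}"
    then have "i < n" "j < n" "l < L" "(x j)\<^sup>2 \<le> 1"
      using IJ x by (auto simp: abs_square_le_1)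
    then have "(x j)\<^sup>2 * p l i j \<le> 1 * (dmax n p l / real n)"
      using p_le_dmax_div[of i j l] p_bounds by (intro mult_mono) auto
    then have "(s i)\<^sup>2 * (\<omega> l)\<^sup>2 * ((x j)\<^sup>2 * p l i j) \<le> (s i)\<^sup>2 * (\<omega> l)\<^sup>2 * (dmax n p l / real n)"
      by (intro mult_left_mono) auto
    then show "(s i * \<omega> l * x j)\<^sup>2 * p l i j \<le> (s i)\<^sup>2 * ((\<omega> l)\<^sup>2 * dmax n p l / real n)"
      by (simp add: power_mult_distrib mult.assoc)
  qed
  also have "\<dots> = real (card J) / real n * (var_degree * (\<Sum>i\<in>I. (s i)\<^sup>2))"
    by (simp add: sum_distrib_left sum_distrib_right sum_divide_distrib[symmetric] algebra_simps)
      (rule disjI2, rule sum.swap)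
  also have "\<dots> \<le> \<alpha> * (var_degree * (\<Sum>i\<in>I. (s i)\<^sup>2))"
    using card_J n_pos var_degree_nonneg by (intro mult_right_mono) (auto simp: field_simps sum_nonneg)
  finally show ?thesis
    by (simp add: mult.assoc)
qed

lemma expectation_exp_row_combination_le:
  assumes IJ: "I \<subseteq> {..<n}" "J \<subseteq> {..<n}" and card_J: "real (card J) \<le> \<alpha> * real n"
    and x: "\<forall>j\<in>J. \<bar>x j\<bar> \<le> 1" and s: "\<forall>i\<in>I. \<forall>l<L. \<bar>s i * \<omega> l\<bar> \<le> 1"
  shows "measure_pmf.expectation (bern_model L n p) (\<lambda>A. exp (\<Sum>i\<in>I. s i * (\<Sum>j\<in>J. centered A i j * x j)))
    \<le> exp (\<alpha> * var_degree * (\<Sum>i\<in>I. (s i)\<^sup>2))"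
proof -
  define D where "D = {..<L} \<times> {..<n} \<times> {..<n}"
  define q where "q c = (case c of (l, i, j) \<Rightarrow> p l i j)" for c :: "nat \<times> nat \<times> nat"
  define a where "a c = (case c of (l, i, j) \<Rightarrow> if i \<in> I \<and> j \<in> J then s i * \<omega> l * x j else 0)" for c
  have linear: "(\<Sum>i\<in>I. s i * (\<Sum>j\<in>J. centered A i j * x j)) = (\<Sum>c\<in>D. a c * ((if A c then 1 else 0) - q c))"
    for A
  proof -
    have "(\<Sum>c\<in>D. a c * ((if A c then 1 else 0) - q c))
        = (\<Sum>i\<in>I. \<Sum>j\<in>J. \<Sum>l<L. s i * \<omega> l * x j * ((if A (l, i, j) then 1 else 0) - p l i j))"
      unfolding D_def a_def q_def using IJ
      by (subst sum_layers_rows_cols[symmetric]) (auto intro!: sum.cong split: prod.split)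
    then show ?thesis
      by (simp add: centered_def Abar_def EAbar_def sum_distrib_left sum_distrib_right
            sum_subtractf[symmetric] algebra_simps)
  qed
  have "(\<Sum>c\<in>D. (a c)\<^sup>2 * q c) = (\<Sum>i\<in>I. \<Sum>j\<in>J. \<Sum>l<L. (s i * \<omega> l * x j)\<^sup>2 * p l i j)"
    unfolding D_def a_def q_def using IJ
    by (subst sum_layers_rows_cols[symmetric]) (auto intro!: sum.cong split: prod.split)
  also have "\<dots> \<le> \<alpha> * var_degree * (\<Sum>i\<in>I. (s i)\<^sup>2)"
    using IJ x card_J by (rule variance_sum_le)
  finally have variance: "(\<Sum>c\<in>D. (a c)\<^sup>2 * q c) \<le> \<alpha> * var_degree * (\<Sum>i\<in>I. (s i)\<^sup>2)" .
  have "measure_pmf.expectation (bern_model L n p) (\<lambda>A. exp (\<Sum>i\<in>I. s i * (\<Sum>j\<in>J. centered A i j * x j)))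
      \<le> exp (\<Sum>c\<in>D. (a c)\<^sup>2 * q c)"
    unfolding linear bern_model_Pi_bernoulli D_def[symmetric] q_def[symmetric]
  proof (rule expectation_exp_linear_Pi_bernoulli_le)
    show "\<forall>c\<in>D. \<bar>a c\<bar> \<le> 1"
      using s x by (auto simp: a_def D_def abs_mult intro: mult_le_one)
  qed (use p_bounds in \<open>auto simp: D_def q_def\<close>)
  also have "\<dots> \<le> exp (\<alpha> * var_degree * (\<Sum>i\<in>I. (s i)\<^sup>2))"
    using variance by simp
  finally show ?thesis .
qed

lemma light_row_bound:
  assumes "i < n" "J \<subseteq> {..<n}" "real (card J) \<le> \<alpha> * real n" "\<forall>j\<in>J. \<bar>x j\<bar> \<le> 1"
    and "(\<Sum>j\<in>J. Abar L \<omega> A i j) \<le> \<alpha> * mean_degree"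
  shows "\<bar>\<Sum>j\<in>J. centered A i j * x j\<bar> \<le> 2 * \<alpha> * mean_degree"
proof -
  have Abar: "0 \<le> Abar L \<omega> A i j" for j
    unfolding Abar_def using weight_pos by (intro sum_nonneg) (auto intro: less_imp_le)
  have EAbar: "0 \<le> EAbar L \<omega> p i j" "EAbar L \<omega> p i j \<le> mean_degree / real n" if "j \<in> J" for j
  proof -
    have "j < n"
      using that assms(2) by auto
    then show "0 \<le> EAbar L \<omega> p i j"
      unfolding EAbar_def using weight_pos p_bounds assms(1) by (intro sum_nonneg) (auto intro: less_imp_le)
    have "EAbar L \<omega> p i j \<le> (\<Sum>l<L. \<omega> l * (dmax n p l / real n))"
      unfolding EAbar_def using \<open>j < n\<close> weight_pos assms(1)
      by (intro sum_mono mult_left_mono p_le_dmax_div) (auto intro: less_imp_le)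
    then show "EAbar L \<omega> p i j \<le> mean_degree / real n"
      by (simp add: sum_divide_distrib)
  qed
  have "\<bar>\<Sum>j\<in>J. centered A i j * x j\<bar> \<le> (\<Sum>j\<in>J. Abar L \<omega> A i j + EAbar L \<omega> p i j)"
  proof (intro order_trans[OF sum_abs] sum_mono)
    fix j
    assume "j \<in> J"
    have "\<bar>centered A i j * x j\<bar> \<le> \<bar>centered A i j\<bar> * 1"
      unfolding abs_mult using assms(4) \<open>j \<in> J\<close> by (intro mult_left_mono) auto
    moreover have "\<bar>centered A i j\<bar> \<le> Abar L \<omega> A i j + EAbar L \<omega> p i j"
      unfolding centered_def using Abar[of j] EAbar(1)[OF \<open>j \<in> J\<close>] by (simp add: abs_le_iff)
    ultimately show "\<bar>centered A i j * x j\<bar> \<le> Abar L \<omega> A i j + EAbar L \<omega> p i j"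
      by linarith
  qed
  also have "\<dots> \<le> \<alpha> * mean_degree + real (card J) * (mean_degree / real n)"
    using assms(5) EAbar(2) sum_bounded_above[of J "\<lambda>j. EAbar L \<omega> p i j" "mean_degree / real n"]
    by (simp add: sum.distrib)
  also have "\<dots> \<le> \<alpha> * mean_degree + \<alpha> * mean_degree"
  proof -
    have "real (card J) / real n \<le> \<alpha>"
      using assms(3) n_pos by (simp add: field_simps)
    then have "real (card J) / real n * mean_degree \<le> \<alpha> * mean_degree"
      using mean_degree_nonneg by (rule mult_right_mono)
    then show ?thesis
      by simp
  qed
  finally show ?thesis
    by simp
qed

lemma abs_grid_slope_mult_weight_le:
  fixes \<alpha> lam :: real
  assumes "q \<in> grid (sqrt lam * (2 * \<alpha> * mean_degree))" "l < L" "0 \<le> \<alpha>" "0 < lam"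
    and "4 * lam * \<alpha> * mean_degree * Max (\<omega> ` {..<L}) \<le> 1"
  shows "\<bar>grid_slope q * sqrt lam * \<omega> l\<bar> \<le> 1"
proof -
  define T where "T = sqrt lam * (2 * \<alpha> * mean_degree)"
  have "0 \<le> T"
    unfolding T_def using assms(3,4) mean_degree_nonneg by (intro mult_nonneg_nonneg) auto
  have "\<bar>grid_slope q\<bar> * sqrt lam \<le> (2 * T) * sqrt lam"
    using abs_grid_slope_le[OF assms(1)[folded T_def] \<open>0 \<le> T\<close>] by (rule mult_right_mono) (use assms(4) in simp)
  moreover have "\<omega> l \<le> Max (\<omega> ` {..<L})"
    using assms(2) by (intro Max_ge) auto
  ultimately have "\<bar>grid_slope q\<bar> * sqrt lam * \<omega> l \<le> (2 * T) * sqrt lam * Max (\<omega> ` {..<L})"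
    by (rule mult_mono) (use \<open>0 \<le> T\<close> assms(2,4) weight_pos in \<open>auto intro: less_imp_le\<close>)
  also have "\<dots> = 4 * lam * \<alpha> * mean_degree * Max (\<omega> ` {..<L})"
    using assms(4) by (simp add: T_def)
  finally show ?thesis
    using assms(2,4,5) weight_pos by (simp add: abs_mult abs_of_pos)
qed

lemma truncated_row_sq_sum_mgf_le:
  fixes \<alpha> lam :: real
  assumes IJ: "I \<subseteq> {..<n}" "J \<subseteq> {..<n}" and card_J: "real (card J) \<le> \<alpha> * real n"
    and x: "\<forall>j\<in>J. \<bar>x j\<bar> \<le> 1" and \<alpha>: "0 \<le> \<alpha>" and lam: "0 < lam"
    and small_var: "8 * (lam * (\<alpha> * var_degree)) \<le> 1"
    and small_slope: "4 * lam * \<alpha> * mean_degree * Max (\<omega> ` {..<L}) \<le> 1"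
  shows "measure_pmf.expectation (bern_model L n p)
      (\<lambda>A. exp (lam * row_sq_sum (centered A) {i\<in>I. (\<Sum>j\<in>J. Abar L \<omega> A i j) \<le> \<alpha> * mean_degree} J x))
    \<le> exp (4 * real (card I))"
proof -
  define light where "light A i \<longleftrightarrow> (\<Sum>j\<in>J. Abar L \<omega> A i j) \<le> \<alpha> * mean_degree" for A i
  define Y where "Y A i = (\<Sum>j\<in>J. centered A i j * x j)" for A i
  define T where "T = sqrt lam * (2 * \<alpha> * mean_degree)"
  have "finite I"
    using IJ finite_subset by blast
  have "measure_pmf.expectation (bern_model L n p) (\<lambda>A. exp (lam * row_sq_sum (centered A) {i\<in>I. light A i} J x))
    = measure_pmf.expectation (bern_model L n p) (\<lambda>A. \<Prod>i\<in>I. exp (if light A i then (sqrt lam * Y A i)\<^sup>2 else 0))"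
    unfolding Y_def using \<open>finite I\<close> lam by (simp add: exp_row_sq_sum_filter)
  also have "\<dots> \<le> (\<Sum>q\<in>grid T. grid_weight q * exp (\<alpha> * var_degree * (grid_slope q * sqrt lam)\<^sup>2)) ^ card I"
  proof (rule expectation_prod_le_mixture_power)
    show "\<forall>A. \<forall>i\<in>I. 0 \<le> exp (if light A i then (sqrt lam * Y A i)\<^sup>2 else 0) \<and> exp (if light A i then (sqrt lam * Y A i)\<^sup>2 else 0)
        \<le> (\<Sum>q\<in>grid T. grid_weight q * exp (grid_slope q * sqrt lam * Y A i))"
    proof (intro allI ballI conjI)
      fix A i
      assume "i \<in> I"
      have "\<bar>sqrt lam * Y A i\<bar> \<le> T" if "light A i"
      proof -
        have "\<bar>Y A i\<bar> \<le> 2 * \<alpha> * mean_degree"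
          unfolding Y_def using that IJ \<open>i \<in> I\<close> card_J x by (intro light_row_bound) (auto simp: light_def)
        then show ?thesis
          unfolding T_def abs_mult using lam by (simp add: mult_left_mono)
      qed
      then show "exp (if light A i then (sqrt lam * Y A i)\<^sup>2 else 0)
          \<le> (\<Sum>q\<in>grid T. grid_weight q * exp (grid_slope q * sqrt lam * Y A i))"
        using exp_truncated_square_le_grid_sum[of "light A i" "sqrt lam * Y A i" T] by (simp add: mult.assoc)
    qed simp
    show "\<forall>f\<in>PiE I (\<lambda>_. grid T). measure_pmf.expectation (bern_model L n p)
        (\<lambda>A. exp (\<Sum>i\<in>I. grid_slope (f i) * sqrt lam * Y A i))
      \<le> exp (\<alpha> * var_degree * (\<Sum>i\<in>I. (grid_slope (f i) * sqrt lam)\<^sup>2))"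
      unfolding Y_def T_def using \<alpha> lam small_slope
      by (intro ballI expectation_exp_row_combination_le IJ card_J x)
        (auto simp: PiE_iff intro: abs_grid_slope_mult_weight_le)
  qed (use \<open>finite I\<close> in \<open>auto simp: finite_set_pmf_bern_model finite_grid grid_weight_nonneg\<close>)
  also have "\<dots> \<le> exp 4 ^ card I"
  proof (intro power_mono sum_nonneg)
    have "(\<Sum>q\<in>grid T. grid_weight q * exp (\<alpha> * var_degree * (grid_slope q * sqrt lam)\<^sup>2))
        = (\<Sum>q\<in>grid T. grid_weight q * exp ((grid_slope q)\<^sup>2 * (lam * (\<alpha> * var_degree))))"
      using lam by (simp add: power_mult_distrib mult_ac)
    also have "\<dots> \<le> exp 4"
      using small_var \<alpha> lam var_degree_nonneg by (intro grid_sum_le_exp_4) auto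
    finally show "(\<Sum>q\<in>grid T. grid_weight q * exp (\<alpha> * var_degree * (grid_slope q * sqrt lam)\<^sup>2)) \<le> exp 4" .
  qed (simp_all add: grid_weight_nonneg)
  also have "\<dots> = exp (4 * real (card I))"
    by (simp add: exp_of_nat_mult[symmetric] mult.commute)
  finally show ?thesis
    by (simp only: light_def)
qed

lemma prob_truncated_row_sq_sum_gt_le:
  fixes \<alpha> lam R :: real
  assumes "I \<subseteq> {..<n}" "J \<subseteq> {..<n}" "real (card J) \<le> \<alpha> * real n"
    and "\<forall>j\<in>J. \<bar>x j\<bar> \<le> 1" "0 \<le> \<alpha>" "0 < lam"
    and "8 * (lam * (\<alpha> * var_degree)) \<le> 1"
    and "4 * lam * \<alpha> * mean_degree * Max (\<omega> ` {..<L}) \<le> 1"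
  shows "measure_pmf.prob (bern_model L n p)
      {A. R < row_sq_sum (centered A) {i\<in>I. (\<Sum>j\<in>J. Abar L \<omega> A i j) \<le> \<alpha> * mean_degree} J x}
    \<le> exp (4 * real (card I) - lam * R)"
proof -
  let ?M = "bern_model L n p"
  let ?Z = "\<lambda>A. row_sq_sum (centered A) {i\<in>I. (\<Sum>j\<in>J. Abar L \<omega> A i j) \<le> \<alpha> * mean_degree} J x"
  have "measure_pmf.prob ?M {A. R < ?Z A} \<le> measure_pmf.prob ?M {A \<in> space ?M. exp (lam * R) \<le> exp (lam * ?Z A)}"
    using assms(6) by (intro measure_pmf.finite_measure_mono) auto
  also have "\<dots> \<le> measure_pmf.expectation ?M (\<lambda>A. exp (lam * ?Z A)) / exp (lam * R)"
    by (intro integral_Markov_inequality_measure[where A = "{}"])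
      (auto intro: integrable_measure_pmf_finite finite_set_pmf_bern_model)
  also have "\<dots> \<le> exp (4 * real (card I)) / exp (lam * R)"
    using assms by (intro divide_right_mono truncated_row_sq_sum_mgf_le) auto
  also have "\<dots> = exp (4 * real (card I) - lam * R)"
    by (simp add: exp_diff)
  finally show ?thesis .
qed

definition bad_event :: "real \<Rightarrow> (nat \<Rightarrow> real) \<Rightarrow> (nat \<times> nat \<times> nat \<Rightarrow> bool) set" where
  "bad_event \<alpha> R = (\<Union>m\<in>{m\<in>{1..n}. real m \<le> \<alpha> * real n}. \<Union>I\<in>{I. I \<subseteq> {..<n} \<and> card I = m}.
      \<Union>J\<in>{J. J \<subseteq> {..<n} \<and> card J = m}. \<Union>v\<in>PiE J (\<lambda>_. {-1, 1}).
        {A. R m < row_sq_sum (centered A) {i\<in>I. (\<Sum>j\<in>J. Abar L \<omega> A i j) \<le> \<alpha> * mean_degree} J v})"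

lemma norm_inf2_le_outside_bad_event:
  assumes "A \<notin> bad_event \<alpha> R" "1 \<le> m" "m \<le> n" "real m \<le> \<alpha> * real n"
    and "I \<subseteq> {..<n}" "J \<subseteq> {..<n}" "card I = m" "card J = m"
  shows "norm_inf2 (centered A) {i\<in>I. (\<Sum>j\<in>J. Abar L \<omega> A i j) \<le> \<alpha> * mean_degree} J \<le> sqrt (R m)"
proof (rule norm_inf2_le_of_sign_vectors)
  show "finite J"
    using assms(6) finite_subset by blast
  have mIJ: "m \<in> {m\<in>{1..n}. real m \<le> \<alpha> * real n}" "I \<in> {I. I \<subseteq> {..<n} \<and> card I = m}"
    "J \<in> {J. J \<subseteq> {..<n} \<and> card J = m}"
    using assms by auto
  show "\<forall>v\<in>PiE J (\<lambda>_. {-1, 1}).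
      row_sq_sum (centered A) {i\<in>I. (\<Sum>j\<in>J. Abar L \<omega> A i j) \<le> \<alpha> * mean_degree} J v \<le> R m"
  proof
    fix v :: "nat \<Rightarrow> real"
    assume "v \<in> PiE J (\<lambda>_. {-1, 1})"
    then have "A \<notin> {A. R m < row_sq_sum (centered A) {i\<in>I. (\<Sum>j\<in>J. Abar L \<omega> A i j) \<le> \<alpha> * mean_degree} J v}"
      using assms(1) mIJ unfolding bad_event_def by blast
    then show "row_sq_sum (centered A) {i\<in>I. (\<Sum>j\<in>J. Abar L \<omega> A i j) \<le> \<alpha> * mean_degree} J v \<le> R m"
      by simp
  qed
qed

lemma prob_bad_event_le_sum:
  fixes b :: "nat \<Rightarrow> real"
  assumes event: "\<And>m I J v. m \<in> {1..n} \<Longrightarrow> real m \<le> \<alpha> * real n \<Longrightarrow> I \<subseteq> {..<n} \<Longrightarrow> J \<subseteq> {..<n} \<Longrightarrow>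
      card I = m \<Longrightarrow> card J = m \<Longrightarrow> v \<in> PiE J (\<lambda>_. {-1, 1}) \<Longrightarrow>
      measure_pmf.prob (bern_model L n p)
        {A. R m < row_sq_sum (centered A) {i\<in>I. (\<Sum>j\<in>J. Abar L \<omega> A i j) \<le> \<alpha> * mean_degree} J v} \<le> b m"
  shows "measure_pmf.prob (bern_model L n p) (bad_event \<alpha> R)
    \<le> (\<Sum>m\<in>{m\<in>{1..n}. real m \<le> \<alpha> * real n}. (real (n choose m))\<^sup>2 * 2 ^ m * b m)"
proof -
  let ?M = "bern_model L n p"
  define Ms where "Ms = {m\<in>{1..n}. real m \<le> \<alpha> * real n}"
  define Sub where "Sub m = {I. I \<subseteq> {..<n} \<and> card I = m}" for m
  let ?event = "\<lambda>m I J v. {A. R m < row_sq_sum (centered A) {i\<in>I. (\<Sum>j\<in>J. Abar L \<omega> A i j) \<le> \<alpha> * mean_degree} J v}"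
  have finite_Sub: "finite (Sub m)" for m
    unfolding Sub_def by (rule finite_subset[of _ "Pow {..<n}"]) auto
  have signs: "finite (PiE J (\<lambda>_. {-1, 1::real}))" "card (PiE J (\<lambda>_. {-1, 1::real})) = 2 ^ m"
    if "J \<in> Sub m" for J m
  proof -
    have "finite J" "card J = m"
      using that finite_subset[of J "{..<n}"] unfolding Sub_def by auto
    then show "finite (PiE J (\<lambda>_. {-1, 1::real}))" "card (PiE J (\<lambda>_. {-1, 1::real})) = 2 ^ m"
      by (simp_all add: finite_PiE card_PiE numeral_2_eq_2)
  qed
  have "measure_pmf.prob ?M (bad_event \<alpha> R)
      \<le> (\<Sum>m\<in>Ms. measure_pmf.prob ?M (\<Union>I\<in>Sub m. \<Union>J\<in>Sub m. \<Union>v\<in>PiE J (\<lambda>_. {-1, 1}). ?event m I J v))"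
    unfolding bad_event_def Ms_def[symmetric] Sub_def[symmetric] by (rule measure_pmf_UN_le) (simp add: Ms_def)
  also have "\<dots> \<le> (\<Sum>m\<in>Ms. \<Sum>I\<in>Sub m. measure_pmf.prob ?M (\<Union>J\<in>Sub m. \<Union>v\<in>PiE J (\<lambda>_. {-1, 1}). ?event m I J v))"
    by (intro sum_mono measure_pmf_UN_le finite_Sub)
  also have "\<dots> \<le> (\<Sum>m\<in>Ms. \<Sum>I\<in>Sub m. \<Sum>J\<in>Sub m. measure_pmf.prob ?M (\<Union>v\<in>PiE J (\<lambda>_. {-1, 1}). ?event m I J v))"
    by (intro sum_mono measure_pmf_UN_le finite_Sub)
  also have "\<dots> \<le> (\<Sum>m\<in>Ms. \<Sum>I\<in>Sub m. \<Sum>J\<in>Sub m. \<Sum>v\<in>PiE J (\<lambda>_. {-1, 1}). measure_pmf.prob ?M (?event m I J v))"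
    by (intro sum_mono measure_pmf_UN_le signs(1)) auto
  also have "\<dots> \<le> (\<Sum>m\<in>Ms. \<Sum>I\<in>Sub m. \<Sum>J\<in>Sub m. \<Sum>v\<in>PiE J (\<lambda>_. {-1, 1::real}). b m)"
    by (rule sum_mono)+ (auto simp: Ms_def Sub_def intro: event)
  also have "\<dots> = (\<Sum>m\<in>Ms. (real (n choose m))\<^sup>2 * 2 ^ m * b m)"
  proof (rule sum.cong[OF refl])
    fix m
    have "card (Sub m) = n choose m"
      using n_subsets[of "{..<n}" m] by (simp add: Sub_def)
    then show "(\<Sum>I\<in>Sub m. \<Sum>J\<in>Sub m. \<Sum>v\<in>PiE J (\<lambda>_. {-1, 1::real}). b m) = (real (n choose m))\<^sup>2 * 2 ^ m * b m"
      using signs(2) by (simp add: power2_eq_square)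
  qed
  finally show ?thesis
    unfolding Ms_def .
qed

lemma prob_sign_vector_event_le:
  fixes c0 \<alpha> r :: real
  assumes c0: "0 < c0" and cond: "Max (\<omega> ` {..<L}) * mean_degree \<le> c0 * var_degree"
    and var: "0 < var_degree" and \<alpha>: "0 < \<alpha>"
    and m: "real m \<le> \<alpha> * real n" and IJ: "I \<subseteq> {..<n}" "J \<subseteq> {..<n}" "card I = m" "card J = m"
    and v: "v \<in> PiE J (\<lambda>_. {-1, 1})"
  shows "measure_pmf.prob (bern_model L n p)
      {A. 16 * (8 + 4 * c0) * (\<alpha> * var_degree * real m * r * ln (exp 1 * real n / real m))
        < row_sq_sum (centered A) {i\<in>I. (\<Sum>j\<in>J. Abar L \<omega> A i j) \<le> \<alpha> * mean_degree} J v}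
    \<le> exp (4 * real m - 16 * real m * r * ln (exp 1 * real n / real m))"
proof -
  define c where "c = 8 + 4 * c0"
  define lam where "lam = 1 / (c * \<alpha> * var_degree)"
  have c: "8 \<le> c" "4 * c0 \<le> c"
    unfolding c_def using c0 by auto
  have lam: "0 < lam" "8 * (lam * (\<alpha> * var_degree)) \<le> 1"
    unfolding lam_def using c \<alpha> var by (auto simp: field_simps)
  have "4 * lam * \<alpha> * mean_degree * Max (\<omega> ` {..<L}) = 4 * (Max (\<omega> ` {..<L}) * mean_degree) / (c * var_degree)"
    unfolding lam_def using \<alpha> by (simp add: field_simps)
  also have "\<dots> \<le> 4 * (c0 * var_degree) / (c * var_degree)"
    using cond c var by (intro divide_right_mono mult_left_mono) auto
  also have "\<dots> \<le> 1"
    using c var by (simp add: field_simps)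
  finally have slope: "4 * lam * \<alpha> * mean_degree * Max (\<omega> ` {..<L}) \<le> 1" .
  define R where "R = 16 * c * (\<alpha> * var_degree * real m * r * ln (exp 1 * real n / real m))"
  have lam_R: "lam * R = 16 * real m * r * ln (exp 1 * real n / real m)"
    unfolding lam_def R_def using c \<alpha> var by (simp add: field_simps)
  have "\<forall>j\<in>J. \<bar>v j\<bar> \<le> 1"
    using v by (auto simp: PiE_iff)
  then have "measure_pmf.prob (bern_model L n p)
      {A. R < row_sq_sum (centered A) {i\<in>I. (\<Sum>j\<in>J. Abar L \<omega> A i j) \<le> \<alpha> * mean_degree} J v}
    \<le> exp (4 * real (card I) - lam * R)"
    using IJ m \<alpha> lam slope by (intro prob_truncated_row_sq_sum_gt_le) auto
  from this[unfolded lam_R IJ(3), unfolded R_def c_def] show ?thesis .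
qed

lemma prob_bad_event_le:
  fixes c0 \<alpha> r :: real
  assumes "0 < c0" "Max (\<omega> ` {..<L}) * mean_degree \<le> c0 * var_degree"
    and "0 < var_degree" "0 < \<alpha>" "1 \<le> r"
  defines "R \<equiv> \<lambda>m. 16 * (8 + 4 * c0) * (\<alpha> * var_degree * real m * r * ln (exp 1 * real n / real m))"
  shows "measure_pmf.prob (bern_model L n p) (bad_event \<alpha> R) \<le> real n powr (- r)"
proof -
  define Ms where "Ms = {m\<in>{1..n}. real m \<le> \<alpha> * real n}"
  have "measure_pmf.prob (bern_model L n p) (bad_event \<alpha> R)
      \<le> (\<Sum>m\<in>Ms. (real (n choose m))\<^sup>2 * 2 ^ m * exp (4 * real m - 16 * real m * r * ln (exp 1 * real n / real m)))"
    unfolding Ms_def R_def using assms(1-4) by (intro prob_bad_event_le_sum prob_sign_vector_event_le) auto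
  also have "\<dots> \<le> (\<Sum>m\<in>Ms. real n powr (- r) / real n)"
    using assms(5) by (intro sum_mono union_bound_term_le) (auto simp: Ms_def)
  also have "\<dots> \<le> real n powr (- r)"
  proof -
    have "card Ms \<le> card {1..n}"
      by (intro card_mono) (auto simp: Ms_def)
    then show ?thesis
      using n_pos by (simp add: field_simps)
  qed
  finally show ?thesis .
qed

lemma prob_good_event_ge:
  fixes c0 \<alpha> r :: real
  assumes "0 < c0" "Max (\<omega> ` {..<L}) * mean_degree \<le> c0 * var_degree"
    and "0 < var_degree" "0 < \<alpha>" "1 \<le> r"
  shows "1 - real n powr (- r) \<le> measure_pmf.prob (bern_model L n p) (good_event n L \<omega> p (sqrt (16 * (8 + 4 * c0))) \<alpha> r)"
proof -
  let ?M = "bern_model L n p"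
  define R where "R m = 16 * (8 + 4 * c0) * (\<alpha> * var_degree * real m * r * ln (exp 1 * real n / real m))" for m
  have "UNIV - bad_event \<alpha> R \<subseteq> good_event n L \<omega> p (sqrt (16 * (8 + 4 * c0))) \<alpha> r"
  proof
    fix A
    assume "A \<in> UNIV - bad_event \<alpha> R"
    then have "norm_inf2 (centered A) {i\<in>I. (\<Sum>j\<in>J. Abar L \<omega> A i j) \<le> \<alpha> * mean_degree} J \<le> sqrt (R m)"
      if "1 \<le> m" "m \<le> n" "real m \<le> \<alpha> * real n" "I \<subseteq> {..<n}" "J \<subseteq> {..<n}" "card I = m" "card J = m"
      for m I J
      using that by (intro norm_inf2_le_outside_bad_event) auto
    moreover have "centered A = (\<lambda>i j. Abar L \<omega> A i j - EAbar L \<omega> p i j)"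
      by (simp add: centered_def fun_eq_iff)
    ultimately show "A \<in> good_event n L \<omega> p (sqrt (16 * (8 + 4 * c0))) \<alpha> r"
      using assms(1) by (auto simp: good_event_def R_def real_sqrt_mult)
  qed
  then have "measure_pmf.prob ?M (UNIV - bad_event \<alpha> R) \<le> measure_pmf.prob ?M (good_event n L \<omega> p (sqrt (16 * (8 + 4 * c0))) \<alpha> r)"
    by (intro measure_pmf.finite_measure_mono) auto
  moreover have "measure_pmf.prob ?M (UNIV - bad_event \<alpha> R) = 1 - measure_pmf.prob ?M (bad_event \<alpha> R)"
    using measure_pmf.prob_compl[of "bad_event \<alpha> R" ?M] by simp
  moreover have "measure_pmf.prob ?M (bad_event \<alpha> R) \<le> real n powr (- r)"
    unfolding R_def using assms by (intro prob_bad_event_le) auto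
  ultimately show ?thesis
    by linarith
qed

lemma prob_good_event_degenerate:
  assumes "var_degree = 0"
  shows "measure_pmf.prob (bern_model L n p) (good_event n L \<omega> p C \<alpha> r) = 1"
proof -
  have "dmax n p l = 0" if "l < L" for l
  proof -
    have "(\<omega> l)\<^sup>2 * dmax n p l = 0"
      using assms that dmax_nonneg by (subst (asm) sum_nonneg_eq_0_iff) auto
    then show ?thesis
      using weight_pos that by fastforce
  qed
  then have p_zero: "\<forall>l<L. \<forall>i<n. \<forall>j<n. p l i j = 0"
    using p_le_dmax_div p_bounds by (metis div_0 order_antisym)
  have "(\<lambda>_. False) \<in> good_event n L \<omega> p C \<alpha> r"
    unfolding good_event_def
  proof (intro CollectI allI impI)
    fix m I J
    assume mIJ: "1 \<le> m \<and> m \<le> n \<and> real m \<le> \<alpha> * real n \<and> I \<subseteq> {..<n} \<and> J \<subseteq> {..<n} \<and> card I = m \<and> card J = m"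
    let ?B = "\<lambda>i j. Abar L \<omega> (\<lambda>_. False) i j - EAbar L \<omega> p i j"
    have "norm_inf2 ?B {i\<in>I. (\<Sum>j\<in>J. Abar L \<omega> (\<lambda>_. False) i j) \<le> \<alpha> * mean_degree} J \<le> sqrt 0"
    proof (rule norm_inf2_le_of_sign_vectors)
      show "finite J"
        using mIJ finite_subset by blast
      have "?B i j = 0" if "i \<in> I" "j \<in> J" for i j
      proof -
        have "i < n" "j < n"
          using that mIJ by auto
        then show ?thesis
          using p_zero by (simp add: Abar_def EAbar_def)
      qed
      then show "\<forall>v\<in>PiE J (\<lambda>_. {-1, 1}). row_sq_sum ?B {i\<in>I. (\<Sum>j\<in>J. Abar L \<omega> (\<lambda>_. False) i j) \<le> \<alpha> * mean_degree} J v \<le> 0"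
        by (simp add: row_sq_sum_def)
    qed
    then show "norm_inf2 ?B {i\<in>I. (\<Sum>j\<in>J. Abar L \<omega> (\<lambda>_. False) i j) \<le> \<alpha> * mean_degree} J
        \<le> C * sqrt (\<alpha> * var_degree * real m * r * ln (exp 1 * real n / real m))"
      using assms by simp
  qed
  then show ?thesis
    by (simp add: bern_model_zero[OF p_zero])
qed

end

theorem mainTheorem12:
  fixes c0 :: real
  assumes "c0 > 0"
  shows "\<exists>C>0. \<forall>(n::nat) (L::nat) (\<omega>::nat \<Rightarrow> real) (p::nat \<Rightarrow> nat \<Rightarrow> nat \<Rightarrow> real)
                  (\<alpha>::real) (r::real).
     n \<ge> 1 \<longrightarrow> L \<ge> 1 \<longrightarrow>
     (\<forall>l<L. \<forall>i<n. \<forall>j<n. 0 \<le> p l i j \<and> p l i j \<le> 1) \<longrightarrow>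
     (\<forall>l<L. \<omega> l > 0) \<longrightarrow> (\<Sum>l<L. \<omega> l) = 1 \<longrightarrow>
     Max (\<omega> ` {..<L}) * (\<Sum>l<L. \<omega> l * dmax n p l) \<le> c0 * (\<Sum>l<L. (\<omega> l)\<^sup>2 * dmax n p l) \<longrightarrow>
     \<alpha> > 0 \<longrightarrow> r \<ge> 1 \<longrightarrow>
     measure_pmf.prob (bern_model L n p)
       {A. \<forall>m I J. 1 \<le> m \<and> m \<le> n \<and> real m \<le> \<alpha> * real n \<and>
              I \<subseteq> {..<n} \<and> J \<subseteq> {..<n} \<and> card I = m \<and> card J = m \<longrightarrow>
              norm_inf2 (\<lambda>i j. Abar L \<omega> A i j - EAbar L \<omega> p i j)
                 {i\<in>I. (\<Sum>j\<in>J. Abar L \<omega> A i j) \<le> \<alpha> * (\<Sum>l<L. \<omega> l * dmax n p l)} J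
              \<le> C * sqrt (\<alpha> * (\<Sum>l<L. (\<omega> l)\<^sup>2 * dmax n p l) * real m * r
                            * ln (exp 1 * real n / real m))}
     \<ge> 1 - real n powr (- r)"
proof (intro exI[of _ "sqrt (16 * (8 + 4 * c0))"] conjI allI impI, fold good_event_def)
  show "0 < sqrt (16 * (8 + 4 * c0))"
    using assms by simp
  fix n L :: nat and \<omega> :: "nat \<Rightarrow> real" and p :: "nat \<Rightarrow> nat \<Rightarrow> nat \<Rightarrow> real" and \<alpha> r :: real
  assume n: "n \<ge> 1" and p: "\<forall>l<L. \<forall>i<n. \<forall>j<n. 0 \<le> p l i j \<and> p l i j \<le> 1"
    and \<omega>: "\<forall>l<L. \<omega> l > 0"
    and cond: "Max (\<omega> ` {..<L}) * (\<Sum>l<L. \<omega> l * dmax n p l) \<le> c0 * (\<Sum>l<L. (\<omega> l)\<^sup>2 * dmax n p l)"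
    and \<alpha>: "\<alpha> > 0" and r: "r \<ge> 1"
  interpret layered_bernoulli n L \<omega> p
    using n p \<omega> by unfold_locales auto
  show "1 - real n powr (- r) \<le> measure_pmf.prob (bern_model L n p) (good_event n L \<omega> p (sqrt (16 * (8 + 4 * c0))) \<alpha> r)"
  proof (cases "var_degree = 0")
    case True
    then show ?thesis
      by (simp add: prob_good_event_degenerate)
  next
    case False
    then show ?thesis
      using var_degree_nonneg assms cond \<alpha> r by (intro prob_good_event_ge) auto
  qed
qed

end
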